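(* Let $X$ and $Y$ be finite-dimensional real Banach spaces and let $T:X\to Y$ be a Hahn-Banach operator of rank $k$ with $\|T\|=1$. Let $x_0\in S(X)$ satisfy $\|Tx_0\|=1$. Then $Tx_0$ belongs to a support set of $B(Y)$ of dimension at least $k-1-d(x_0)$.
   Context: All spaces are real. $S(X)$ and $B(X)$ denote the unit sphere and closed unit ball of a Banach space $X$. A bounded linear operator $T:X\to Y$ between Banach spaces is a Hahn-Banach operator if for every Banach space $Z$ and every isometric embedding of $X$ into $Z$ (regarding $X$ as a subspace of $Z$) there exists a bounded linear operator $\tilde T:Z\to Y$ with $\|\tilde T\|=\|T\|$ and $\tilde Tx=Tx$ for all $x\in X$. For a finite-dimensional space $Y$, a support set of $B(Y)$ is the intersection of $B(Y)$ with a supporting hyperplane of $B(Y)$; the dimension of a set is the dimension of its affine hull. For $x\in S(X)$, $d(x)$ is the dimension of the set $\{x^*\in S(X^* ): x^*(x)=1\}$. *)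

theory Defs
  imports "HOL-Analysis.Analysis" "HOL-Probability.Discrete_Topology"
begin

text \<open>Dimension of a set = dimension of its affine hull (= -1 for the empty set).
  For nonempty S and a in S, the affine hull of S is a + span (S - a).\<close>
definition set_dim :: "'a::real_vector set \<Rightarrow> int" where
  "set_dim S = (if S = {} then -1
     else int (dim ((\<lambda>x. x - (SOME a. a \<in> S)) ` S)))"

definition unit_sphere :: "'a::real_normed_vector set" where
  "unit_sphere = {x. norm x = 1}"

definition unit_ball :: "'a::real_normed_vector set" where
  "unit_ball = {x. norm x \<le> 1}"

definition support_set_of_ball :: "'b::real_normed_vector set \<Rightarrow> bool" where
  "support_set_of_ball F \<longleftrightarrow>
     (\<exists>(f::'b \<Rightarrow>\<^sub>L real) c. f \<noteq> 0 \<and> (\<forall>y\<in>unit_ball. blinfun_apply f y \<le> c)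
        \<and> (\<exists>y\<in>unit_ball. blinfun_apply f y = c)
        \<and> F = unit_ball \<inter> {y. blinfun_apply f y = c})"

definition face_dim :: "'a::real_normed_vector \<Rightarrow> int" where
  "face_dim x = set_dim {f::'a \<Rightarrow>\<^sub>L real. norm f = 1 \<and> blinfun_apply f x = 1}"

definition hahn_banach_wrt ::
  "'z::{real_normed_vector,complete_space} itself \<Rightarrow> ('a::real_normed_vector \<Rightarrow> 'b::real_normed_vector) \<Rightarrow> bool" where
  "hahn_banach_wrt _ T \<longleftrightarrow> bounded_linear T \<and>
     (\<forall>J::'a \<Rightarrow> 'z. linear J \<and> (\<forall>x. norm (J x) = norm x) \<longrightarrow>
        (\<exists>S::'z \<Rightarrow> 'b. bounded_linear S \<and> onorm S = onorm T \<and> (\<forall>x. S (J x) = T x)))"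

text \<open>Hahn-Banach operator: Z ranges over (subspaces of) l_infinity = bounded
  (continuous) real functions on nat with the discrete metric, which is 1-injective.\<close>
abbreviation hahn_banach_op :: "('a::real_normed_vector \<Rightarrow> 'b::real_normed_vector) \<Rightarrow> bool" where
  "hahn_banach_op T \<equiv> hahn_banach_wrt TYPE(nat discrete \<Rightarrow>\<^sub>C real) T"

end

theory Submission
  imports Defs
begin

text \<open>Embed \<open>X\<close> isometrically into \<open>l\<^sub>\<infinity>\<close> through a countable norming family of
  functionals, and use the Hahn-Banach property to extend \<open>T\<close> to an operator \<open>S\<close> on \<open>l\<^sub>\<infinity>\<close>
  of norm one. A norming functional \<open>y\<^sup>*\<close> of \<open>T x\<^sub>0\<close> cuts out a support set \<open>F\<close> of \<open>B(Y)\<close>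
  containing \<open>T x\<^sub>0\<close>, and \<open>\<psi> = y\<^sup>* \<circ> S\<close> norms \<open>a = J x\<^sub>0\<close>. The vectors annihilated by
  every norming functional of \<open>x\<^sub>0\<close> form a subspace \<open>K\<close> of codimension at most \<open>d(x\<^sub>0) + 1\<close>.
  For \<open>x \<in> K\<close>, compactness of the dual ball shows that the coordinates of \<open>J x\<close> are uniformly
  small wherever \<open>\<bar>a\<^sub>i\<bar>\<close> stays away from \<open>1\<close>, so truncating coordinatewise places
  \<open>T x\<close> in the linear span of \<open>F - T x\<^sub>0\<close>. Hence
  \<open>k \<le> dim T(K) + d(x\<^sub>0) + 1 \<le> dim F + d(x\<^sub>0) + 1\<close>.\<close>

section \<open>Finite-dimensional linear algebra\<close>

lemma finite_dimensional_vector_space_real: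
  assumes "finite (B :: 'a::real_vector set)" "span B = UNIV"
  obtains Bb where "finite_dimensional_vector_space (scaleR :: real \<Rightarrow> 'a \<Rightarrow> 'a) Bb"
proof -
  define Bb where "Bb = extend_basis ({}::'a set)"
  have Bb: "independent Bb" "span Bb = UNIV"
    using independent_extend_basis[OF independent_empty] span_extend_basis[OF independent_empty]
    unfolding Bb_def by auto
  moreover have "finite Bb"
    using independent_span_bound[of B Bb] assms Bb by auto
  ultimately have "finite_dimensional_vector_space (scaleR :: real \<Rightarrow> 'a \<Rightarrow> 'a) Bb"
    unfolding finite_dimensional_vector_space_def finite_dimensional_vector_space_axioms_def
    by (simp add: real_vector.vector_space_axioms span_raw_def dependent_raw_def)
  then show ?thesis by (rule that)
qed

lemma dim_mono_finite_span:
  fixes B V W :: "'a::real_vector set"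
  assumes "finite B" "span B = UNIV" "V \<subseteq> span W"
  shows "dim V \<le> dim W"
proof -
  obtain Bb where "finite_dimensional_vector_space (scaleR :: real \<Rightarrow> 'a \<Rightarrow> 'a) Bb"
    by (rule finite_dimensional_vector_space_real[OF assms(1,2)])
  from finite_dimensional_vector_space.dim_mono[OF this] assms(3) show ?thesis
    by (simp add: dim_raw_def span_raw_def)
qed

lemma dim_insert_le_finite_span:
  fixes B S :: "'a::real_vector set"
  assumes "finite B" "span B = UNIV"
  shows "dim (insert x S) \<le> dim S + 1"
proof -
  obtain Bb where "finite_dimensional_vector_space (scaleR :: real \<Rightarrow> 'a \<Rightarrow> 'a) Bb"
    by (rule finite_dimensional_vector_space_real[OF assms])
  from finite_dimensional_vector_space.dim_insert[OF this] show ?thesis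
    by (simp add: dim_raw_def span_raw_def)
qed

lemma set_dim_eq_dim_translate:
  assumes "a \<in> S"
  shows "set_dim S = int (dim ((\<lambda>x. x - a) ` S))"
proof -
  define a' where "a' = (SOME a. a \<in> S)"
  have "a' \<in> S" unfolding a'_def using assms by (rule someI)
  have translate: "(\<lambda>x. x - b) ` S \<subseteq> span ((\<lambda>x. x - b') ` S)"
    if "b \<in> S" "b' \<in> S" for b b'
  proof
    fix y assume "y \<in> (\<lambda>x. x - b) ` S"
    then obtain x where "x \<in> S" "y = x - b"
      by auto
    have "x - b' \<in> span ((\<lambda>x. x - b') ` S)" "b - b' \<in> span ((\<lambda>x. x - b') ` S)"
      using \<open>x \<in> S\<close> that by (auto intro: span_base)
    then have "(x - b') - (b - b') \<in> span ((\<lambda>x. x - b') ` S)"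
      by (rule span_diff)
    then show "y \<in> span ((\<lambda>x. x - b') ` S)"
      using \<open>y = x - b\<close> by simp
  qed
  have "span ((\<lambda>x. x - a') ` S) = span ((\<lambda>x. x - a) ` S)"
    using translate assms \<open>a' \<in> S\<close> by (simp add: span_eq)
  then have "dim ((\<lambda>x. x - a') ` S) = dim ((\<lambda>x. x - a) ` S)"
    using assms \<open>a' \<in> S\<close> by (metis dim_span)
  then show ?thesis
    using assms unfolding set_dim_def a'_def by auto
qed

lemma subspace_common_kernel:
  assumes "\<And>g. g \<in> H \<Longrightarrow> linear (g :: 'a::real_vector \<Rightarrow> real)"
  shows "subspace {x. \<forall>g\<in>H. g x = 0}"
  using assms unfolding subspace_def by (auto simp: linear_0 linear_add linear_scale)

lemma dim_image_le_dim_image_kernel_section: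
  fixes T :: "'a::real_vector \<Rightarrow> 'b::real_vector" and h :: "'a \<Rightarrow> real" and BY :: "'b set"
  assumes T: "linear T" and h: "linear h" and K: "subspace K" and "finite BY" "span BY = UNIV"
  shows "dim (T ` K) \<le> dim (T ` (K \<inter> {x. h x = 0})) + 1"
proof (cases "\<forall>x\<in>K. h x = 0")
  case True
  then have "K \<inter> {x. h x = 0} = K" by blast
  then show ?thesis by simp
next
  case False
  then obtain e where e: "e \<in> K" "h e \<noteq> 0" by blast
  have "T ` K \<subseteq> span (insert (T e) (T ` (K \<inter> {x. h x = 0})))"
  proof
    fix y assume "y \<in> T ` K"
    then obtain x where "x \<in> K" "y = T x" by blast
    define x' where "x' = x - (h x / h e) *\<^sub>R e"
    have "x' \<in> K \<inter> {x. h x = 0}"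
      unfolding x'_def using \<open>x \<in> K\<close> e K
      by (simp add: subspace_diff subspace_scale linear_diff[OF h] linear_scale[OF h])
    moreover have "y = T x' + (h x / h e) *\<^sub>R T e"
      unfolding x'_def \<open>y = T x\<close> by (simp add: linear_diff[OF T] linear_scale[OF T])
    ultimately show "y \<in> span (insert (T e) (T ` (K \<inter> {x. h x = 0})))"
      by (simp add: span_add span_scale span_base)
  qed
  then have "dim (T ` K) \<le> dim (insert (T e) (T ` (K \<inter> {x. h x = 0})))"
    by (rule dim_mono_finite_span[OF \<open>finite BY\<close> \<open>span BY = UNIV\<close>])
  also have "\<dots> \<le> dim (T ` (K \<inter> {x. h x = 0})) + 1"
    by (rule dim_insert_le_finite_span[OF \<open>finite BY\<close> \<open>span BY = UNIV\<close>])
  finally show ?thesis .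
qed

lemma dim_range_le_dim_image_common_kernel:
  fixes T :: "'a::real_vector \<Rightarrow> 'b::real_vector" and H :: "('a \<Rightarrow> real) set" and BY :: "'b set"
  assumes T: "linear T" and "finite H" and H: "\<And>g. g \<in> H \<Longrightarrow> linear g"
    and "finite BY" "span BY = UNIV"
  shows "dim (range T) \<le> dim (T ` {x. \<forall>g\<in>H. g x = 0}) + card H"
  using \<open>finite H\<close> H
proof (induction H rule: finite_induct)
  case empty
  then show ?case by simp
next
  case (insert h H)
  have "{x. \<forall>g\<in>insert h H. g x = 0} = {x. \<forall>g\<in>H. g x = 0} \<inter> {x. h x = 0}"
    by auto
  moreover have "dim (T ` {x. \<forall>g\<in>H. g x = 0}) \<le> dim (T ` ({x. \<forall>g\<in>H. g x = 0} \<inter> {x. h x = 0})) + 1"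
    using insert.prems
    by (intro dim_image_le_dim_image_kernel_section[OF T _ subspace_common_kernel \<open>finite BY\<close>
          \<open>span BY = UNIV\<close>]) auto
  ultimately show ?case
    using insert by simp
qed

lemma linear_image_subspace_subset_span:
  fixes T :: "'a::real_normed_vector \<Rightarrow> 'b::real_vector"
  assumes T: "linear T" and X: "subspace X"
    and unit: "\<And>x. x \<in> X \<Longrightarrow> norm x \<le> 1 \<Longrightarrow> T x \<in> span W"
  shows "T ` X \<subseteq> span W"
proof
  fix y assume "y \<in> T ` X"
  then obtain x where "x \<in> X" "y = T x" by blast
  define m where "m = max 1 (norm x)"
  have "m > 0" "norm ((1 / m) *\<^sub>R x) \<le> 1"
    unfolding m_def by (auto simp: divide_le_eq_1)
  moreover have "(1 / m) *\<^sub>R x \<in> X"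
    using subspace_scale[OF X \<open>x \<in> X\<close>] .
  ultimately have "m *\<^sub>R T ((1 / m) *\<^sub>R x) \<in> span W"
    using unit by (simp add: span_scale)
  then show "y \<in> span W"
    using \<open>m > 0\<close> \<open>y = T x\<close> by (simp add: linear_scale[OF T])
qed

section \<open>Hahn-Banach extension in finite dimensions\<close>

definition contractive_functional :: "('a::real_normed_vector \<Rightarrow> real) \<Rightarrow> bool" where
  "contractive_functional g \<longleftrightarrow> linear g \<and> (\<forall>x. \<bar>g x\<bar> \<le> norm x)"

lemma contractive_functional_bounded_linear:
  assumes "contractive_functional h"
  shows "bounded_linear h"
  using assms unfolding contractive_functional_def
  by (intro bounded_linear_intro[of _ 1]) (auto simp: linear_add linear_scale)

lemma norm_Blinfun_norming_functional:
  assumes "contractive_functional h" "norm x0 = 1" "h x0 = 1"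
  shows "norm (Blinfun h) = 1"
proof -
  have "bounded_linear h"
    using assms(1) by (rule contractive_functional_bounded_linear)
  moreover have "onorm h \<le> 1"
    using onorm_bound[of 1 h] assms(1) by (simp add: contractive_functional_def)
  moreover have "1 \<le> onorm h"
    using onorm[OF \<open>bounded_linear h\<close>, of x0] assms(2,3) by simp
  ultimately show ?thesis
    by (simp add: norm_blinfun.rep_eq bounded_linear_Blinfun_apply)
qed

lemma contractive_functional_compose:
  assumes f: "contractive_functional f" and S: "linear S" "\<And>u. norm (S u) \<le> norm u"
  shows "contractive_functional (\<lambda>u. f (S u))"
proof -
  have "linear (\<lambda>u. f (S u))"
    using linear_compose[OF S(1), of f] f unfolding contractive_functional_def by (simp add: o_def)
  moreover have "\<bar>f (S u)\<bar> \<le> norm u" for u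
    using f S(2)[of u] unfolding contractive_functional_def by (metis order_trans)
  ultimately show ?thesis
    by (simp add: contractive_functional_def)
qed

lemma norm_dominated_extension_value:
  fixes g :: "'a::real_normed_vector \<Rightarrow> real"
  assumes g: "linear g" and V: "subspace V" and dominated: "\<And>x. x \<in> V \<Longrightarrow> g x \<le> norm x"
  obtains c where "\<And>u. u \<in> V \<Longrightarrow> g u + c \<le> norm (u + b)"
    "\<And>u. u \<in> V \<Longrightarrow> g u - c \<le> norm (u - b)"
proof -
  have gap: "g u - norm (u - b) \<le> norm (w + b) - g w" if "u \<in> V" "w \<in> V" for u w
  proof -
    have "g u + g w = g (u + w)"
      using linear_add[OF g] by simp
    also have "\<dots> \<le> norm (u + w)"
      using dominated subspace_add[OF V] that by blast
    also have "\<dots> \<le> norm (u - b) + norm (w + b)"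
      using norm_triangle_ineq[of "u - b" "w + b"] by simp
    finally show ?thesis by simp
  qed
  define c where "c = Sup {g u - norm (u - b) | u. u \<in> V}"
  have "g u - norm (u - b) \<le> c" if "u \<in> V" for u
    unfolding c_def using that gap[OF _ subspace_0[OF V]]
    by (intro cSup_upper) (auto intro!: bdd_aboveI)
  moreover have "c \<le> norm (w + b) - g w" if "w \<in> V" for w
    unfolding c_def using that gap subspace_0[OF V] by (intro cSup_least) auto
  ultimately show ?thesis
    by (intro that[of c]) force+
qed

lemma norm_dominated_extension_scaled:
  fixes g :: "'a::real_normed_vector \<Rightarrow> real"
  assumes g: "linear g" and V: "subspace V" and dominated: "\<And>x. x \<in> V \<Longrightarrow> g x \<le> norm x"
    and plus: "\<And>u. u \<in> V \<Longrightarrow> g u + c \<le> norm (u + b)"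
    and minus: "\<And>u. u \<in> V \<Longrightarrow> g u - c \<le> norm (u - b)"
    and "u \<in> V"
  shows "g u + t * c \<le> norm (u + t *\<^sub>R b)"
proof (cases t "0::real" rule: linorder_cases)
  case less
  define w where "w = (1 / (- t)) *\<^sub>R u"
  have "w \<in> V"
    unfolding w_def using subspace_scale[OF V \<open>u \<in> V\<close>] .
  have "u + t *\<^sub>R b = (- t) *\<^sub>R (w - b)" "g u + t * c = (- t) * (g w - c)"
    using less by (simp_all add: w_def linear_scale[OF g] linear_neg[OF g] algebra_simps)
  moreover have "(- t) * (g w - c) \<le> (- t) * norm (w - b)"
    using minus[OF \<open>w \<in> V\<close>] less by (intro mult_left_mono) auto
  ultimately show ?thesis
    using less by simp
next
  case equal
  then show ?thesis using dominated \<open>u \<in> V\<close> by simp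
next
  case greater
  define w where "w = (1 / t) *\<^sub>R u"
  have "w \<in> V"
    unfolding w_def using subspace_scale[OF V \<open>u \<in> V\<close>] .
  have "u + t *\<^sub>R b = t *\<^sub>R (w + b)" "g u + t * c = t * (g w + c)"
    using greater by (simp_all add: w_def linear_scale[OF g] algebra_simps)
  moreover have "t * (g w + c) \<le> t * norm (w + b)"
    using plus[OF \<open>w \<in> V\<close>] greater by (intro mult_left_mono) auto
  ultimately show ?thesis
    using greater by simp
qed

lemma norm_dominated_construct_insert:
  fixes h :: "'a::real_normed_vector \<Rightarrow> real"
  assumes B: "independent B" and "A \<subseteq> B" "b \<in> B" "b \<notin> A"
    and h: "\<forall>x\<in>span A. construct B h x \<le> norm x"
  obtains c where "\<forall>x\<in>span (insert b A). construct B (h(b := c)) x \<le> norm x"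
proof -
  note lin = linear_construct[OF B]
  obtain c where plus: "\<And>u. u \<in> span A \<Longrightarrow> construct B h u + c \<le> norm (u + b)"
    and minus: "\<And>u. u \<in> span A \<Longrightarrow> construct B h u - c \<le> norm (u - b)"
    using norm_dominated_extension_value[OF lin subspace_span] h by blast
  have agree: "construct B (h(b := c)) u = construct B h u" if "u \<in> span A" for u
    by (rule linear_eq_on_span[OF lin lin _ that])
      (use assms in \<open>auto simp: construct_basis\<close>)
  have "construct B (h(b := c)) x \<le> norm x" if "x \<in> span (insert b A)" for x
  proof -
    obtain t where u: "x - t *\<^sub>R b \<in> span A"
      using \<open>x \<in> span (insert b A)\<close> by (auto simp: span_insert)
    have "construct B (h(b := c)) x = construct B (h(b := c)) ((x - t *\<^sub>R b) + t *\<^sub>R b)"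
      by simp
    also have "\<dots> = construct B (h(b := c)) (x - t *\<^sub>R b) + t * construct B (h(b := c)) b"
      by (simp only: linear_add[OF lin] linear_scale[OF lin] real_scaleR_def)
    also have "\<dots> = construct B h (x - t *\<^sub>R b) + t * c"
      using agree[OF u] by (simp add: construct_basis[OF B \<open>b \<in> B\<close>])
    also have "\<dots> \<le> norm (x - t *\<^sub>R b + t *\<^sub>R b)"
      by (rule norm_dominated_extension_scaled[OF lin subspace_span])
        (use h plus minus u in auto)
    finally show ?thesis
      by simp
  qed
  then show ?thesis
    using that by blast
qed

lemma norm_dominated_construct_extension:
  fixes h0 :: "'a::real_normed_vector \<Rightarrow> real"
  assumes B: "independent B" and "A0 \<subseteq> B" "finite A" "A \<subseteq> B"
    and dominated: "\<forall>x\<in>span A0. construct B h0 x \<le> norm x"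
  shows "\<exists>h. (\<forall>a\<in>A0. h a = h0 a) \<and> (\<forall>x\<in>span (A0 \<union> A). construct B h x \<le> norm x)"
  using \<open>finite A\<close> \<open>A \<subseteq> B\<close>
proof (induction A rule: finite_induct)
  case empty
  then show ?case using dominated by auto
next
  case (insert b A)
  then obtain h where h0: "\<forall>a\<in>A0. h a = h0 a"
    and h: "\<forall>x\<in>span (A0 \<union> A). construct B h x \<le> norm x"
    by auto
  show ?case
  proof (cases "b \<in> A0 \<union> A")
    case True
    then have "A0 \<union> insert b A = A0 \<union> A" by blast
    then show ?thesis using h0 h by auto
  next
    case False
    obtain c where "\<forall>x\<in>span (insert b (A0 \<union> A)). construct B (h(b := c)) x \<le> norm x"
      using norm_dominated_construct_insert[OF B _ _ False h] insert.prems \<open>A0 \<subseteq> B\<close> by blast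
    then have "\<forall>x\<in>span (A0 \<union> insert b A). construct B (h(b := c)) x \<le> norm x"
      by (simp add: Un_insert_right)
    moreover have "\<forall>a\<in>A0. (h(b := c)) a = h0 a"
      using h0 False by simp
    ultimately show ?thesis
      by blast
  qed
qed

lemma exists_norming_functional:
  fixes v :: "'a::real_normed_vector" and B0 :: "'a set"
  assumes "finite B0" "span B0 = UNIV" and "norm v = 1"
  obtains g where "contractive_functional g" "g v = 1"
proof -
  have iv: "independent {v}"
    using \<open>norm v = 1\<close> by (auto simp: independent_insert)
  define B where "B = extend_basis {v}"
  have B: "independent B" "span B = UNIV" "v \<in> B"
    using extend_basis_superset[OF iv] independent_extend_basis[OF iv] span_extend_basis[OF iv]
    unfolding B_def by auto
  have "finite B"
    using independent_span_bound[of B0 B] assms B by auto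
  define h0 where "h0 b = (if b = v then 1 else 0 :: real)" for b
  have "construct B h0 x \<le> norm x" if x: "x \<in> span {v}" for x
  proof -
    obtain t where "x = t *\<^sub>R v"
      using x by (auto simp: span_singleton)
    then have "construct B h0 x = t"
      using B by (simp add: linear_scale[OF linear_construct] construct_basis h0_def)
    then show ?thesis
      using \<open>x = t *\<^sub>R v\<close> \<open>norm v = 1\<close> by simp
  qed
  moreover have "{v} \<union> B = B"
    using B(3) by blast
  ultimately obtain h where h: "h v = h0 v" "\<And>x. construct B h x \<le> norm x"
    using norm_dominated_construct_extension[OF B(1) _ \<open>finite B\<close> order_refl, of "{v}" h0] B
    by auto
  define g where "g = construct B h"
  have "linear g"
    unfolding g_def using B(1) by (rule linear_construct)
  moreover have "\<bar>g x\<bar> \<le> norm x" for x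
  proof -
    have "g x \<le> norm x" "g (- x) \<le> norm (- x)"
      using h(2) unfolding g_def by blast+
    then show ?thesis
      using linear_neg[OF \<open>linear g\<close>, of x] by simp
  qed
  moreover have "g v = 1"
    using h(1) B by (simp add: g_def construct_basis h0_def)
  ultimately show ?thesis
    using that unfolding contractive_functional_def by blast
qed

lemma exists_norming_blinfun:
  fixes x0 :: "'a::real_normed_vector" and BX :: "'a set"
  assumes "finite BX" "span BX = UNIV" "norm x0 = 1"
  obtains f :: "'a \<Rightarrow>\<^sub>L real" where "norm f = 1" "blinfun_apply f x0 = 1"
proof -
  obtain g where g: "contractive_functional g" "g x0 = 1"
    using exists_norming_functional[OF assms] by blast
  then have "norm (Blinfun g) = 1" "blinfun_apply (Blinfun g) x0 = 1"
    using assms(3)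
    by (simp_all add: norm_Blinfun_norming_functional contractive_functional_bounded_linear
        bounded_linear_Blinfun_apply)
  then show ?thesis
    by (rule that)
qed

lemma support_set_of_ball_norming_face:
  assumes f: "contractive_functional f" and "norm y0 = 1" "f y0 = 1"
  shows "support_set_of_ball (unit_ball \<inter> {y. f y = 1})"
proof -
  have apply_f: "blinfun_apply (Blinfun f) = f"
    using f by (simp add: contractive_functional_bounded_linear bounded_linear_Blinfun_apply)
  have "f y \<le> 1" if "y \<in> unit_ball" for y
    using f that unfolding contractive_functional_def unit_ball_def
    by (metis abs_le_D1 mem_Collect_eq order_trans)
  moreover have "y0 \<in> unit_ball"
    using \<open>norm y0 = 1\<close> by (simp add: unit_ball_def)
  moreover have "Blinfun f \<noteq> 0"
    using \<open>f y0 = 1\<close> apply_f by (metis zero_blinfun.rep_eq zero_neq_one)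
  ultimately show ?thesis
    unfolding support_set_of_ball_def using \<open>f y0 = 1\<close> apply_f
    by (intro exI[of _ "Blinfun f"] exI[of _ 1]) auto
qed

section \<open>Isometric embedding into \<open>l\<^sub>\<infinity>\<close>\<close>

lemma rational_combination_approx:
  fixes B :: "'a::real_normed_vector set"
  assumes "finite B" "span B = UNIV" "e > 0"
  obtains r where "\<And>b. r b \<in> \<rat>" "norm (x - (\<Sum>b\<in>B. r b *\<^sub>R b)) < e"
proof -
  obtain u where u: "x = (\<Sum>b\<in>B. u b *\<^sub>R b)"
    using span_finite[OF \<open>finite B\<close>] assms(2) by blast
  define K where "K = 1 + (\<Sum>b\<in>B. norm b)"
  have "K > 0"
    unfolding K_def by (simp add: sum_nonneg add_pos_nonneg)
  define d where "d = e / K"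
  have "d > 0"
    unfolding d_def using \<open>e > 0\<close> \<open>K > 0\<close> by simp
  have "\<exists>q\<in>\<rat>. \<bar>u b - q\<bar> < d" for b
  proof -
    obtain q where "q \<in> \<rat>" "u b - d < q" "q < u b + d"
      using Rats_dense_in_real[of "u b - d" "u b + d"] \<open>d > 0\<close> by auto
    then show ?thesis
      by (intro bexI[of _ q]) auto
  qed
  then obtain r where r: "\<And>b. r b \<in> \<rat>" "\<And>b. \<bar>u b - r b\<bar> < d"
    by metis
  have "norm (x - (\<Sum>b\<in>B. r b *\<^sub>R b)) = norm (\<Sum>b\<in>B. (u b - r b) *\<^sub>R b)"
    unfolding u by (simp add: sum_subtractf scaleR_diff_left)
  also have "\<dots> \<le> (\<Sum>b\<in>B. d * norm b)"
    by (rule sum_norm_le) (simp add: mult_right_mono less_imp_le r(2))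
  also have "\<dots> < d * K"
    unfolding K_def using \<open>d > 0\<close> by (simp add: sum_distrib_left[symmetric] distrib_left)
  also have "\<dots> = e"
    unfolding d_def using \<open>K > 0\<close> by simp
  finally show ?thesis
    using r(1) that by blast
qed

lemma dense_sequence_finite_span:
  fixes B :: "'a::real_normed_vector set"
  assumes "finite B" "span B = UNIV"
  obtains q :: "nat \<Rightarrow> 'a" where "\<And>x e. e > 0 \<Longrightarrow> \<exists>n. norm (x - q n) < e"
proof -
  define Q where "Q = (\<lambda>r. \<Sum>b\<in>B. r b *\<^sub>R b) ` (PiE B (\<lambda>_. \<rat>))"
  have "countable Q"
    unfolding Q_def using \<open>finite B\<close> countable_rat by (intro countable_image countable_PiE) auto
  have "(\<lambda>b\<in>B. 0) \<in> PiE B (\<lambda>_. \<rat>)"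
    by auto
  then have "Q \<noteq> {}"
    unfolding Q_def by blast
  have "\<exists>y\<in>Q. norm (x - y) < e" if "e > 0" for x e
  proof -
    obtain r where "\<And>b. r b \<in> \<rat>" "norm (x - (\<Sum>b\<in>B. r b *\<^sub>R b)) < e"
      using rational_combination_approx[OF assms \<open>e > 0\<close>] by blast
    moreover have "(\<Sum>b\<in>B. r b *\<^sub>R b) \<in> Q"
      unfolding Q_def using calculation(1) by (intro image_eqI[of _ _ "restrict r B"]) auto
    ultimately show ?thesis by blast
  qed
  then show ?thesis
    using that range_from_nat_into[OF \<open>Q \<noteq> {}\<close> \<open>countable Q\<close>] by (metis rangeE)
qed

lemma exists_norming_functional_at:
  fixes y :: "'a::real_normed_vector" and B :: "'a set"
  assumes "finite B" "span B = UNIV"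
  obtains g where "contractive_functional g" "g y = norm y"
proof (cases "y = 0")
  case True
  then show ?thesis
    using that[of "\<lambda>x. 0"] linear_zero by (simp add: contractive_functional_def)
next
  case False
  then have "norm ((1 / norm y) *\<^sub>R y) = 1"
    by simp
  then obtain g where g: "contractive_functional g" "g ((1 / norm y) *\<^sub>R y) = 1"
    using exists_norming_functional[OF assms] by blast
  then have "g y = norm y"
    using False by (simp add: contractive_functional_def linear_scale field_simps)
  then show ?thesis
    using g(1) that by blast
qed

lemma norming_sequence_finite_span:
  fixes B :: "'a::real_normed_vector set"
  assumes "finite B" "span B = UNIV"
  obtains g :: "nat \<Rightarrow> 'a \<Rightarrow> real"
  where "\<And>n. contractive_functional (g n)" "\<And>x e. e > 0 \<Longrightarrow> \<exists>n. g n x > norm x - e"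
proof -
  obtain q :: "nat \<Rightarrow> 'a" where q: "\<And>x e. e > 0 \<Longrightarrow> \<exists>n. norm (x - q n) < e"
    using dense_sequence_finite_span[OF assms] by blast
  have "\<exists>g. contractive_functional g \<and> g (q n) = norm (q n)" for n
    using exists_norming_functional_at[OF assms, of "q n"] by blast
  then obtain g where g: "\<And>n. contractive_functional (g n)" "\<And>n. g n (q n) = norm (q n)"
    by metis
  have "\<exists>n. g n x > norm x - e" if "e > 0" for x e
  proof -
    obtain n where n: "norm (x - q n) < e / 2"
      using q[of "e / 2"] \<open>e > 0\<close> by auto
    have "g n x = g n (q n) + g n (x - q n)"
      using g(1) by (simp add: contractive_functional_def linear_diff)
    moreover have "\<bar>g n (x - q n)\<bar> \<le> norm (x - q n)"
      using g(1) by (simp add: contractive_functional_def)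
    moreover have "norm x \<le> norm (q n) + norm (x - q n)"
      using norm_triangle_ineq[of "q n" "x - q n"] by simp
    ultimately show ?thesis
      using g(2)[of n] n by (intro exI[of _ n]) linarith
  qed
  with g(1) show ?thesis by (rule that)
qed

type_synonym linf = "nat discrete \<Rightarrow>\<^sub>C real"

lemma apply_Bcontfun_discrete:
  assumes "\<And>i. norm (f i) \<le> C"
  shows "apply_bcontfun (Bcontfun (f :: 'x discrete \<Rightarrow> 'y::real_normed_vector)) = f"
proof -
  have "continuous_on UNIV f"
    unfolding continuous_on_open_invariant using open_discrete by blast
  then show ?thesis
    using assms by (intro Bcontfun_inverse bcontfun_normI)
qed

lemma isometric_embedding_linf:
  fixes B :: "'a::real_normed_vector set"
  assumes "finite B" "span B = UNIV"
  obtains J :: "'a \<Rightarrow> linf" where "linear J" "\<And>x. norm (J x) = norm x"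
proof -
  obtain g :: "nat \<Rightarrow> 'a \<Rightarrow> real" where g: "\<And>n. contractive_functional (g n)"
    and norming: "\<And>x e. e > 0 \<Longrightarrow> \<exists>n. g n x > norm x - e"
    using norming_sequence_finite_span[OF assms] by blast
  define J where "J x = Bcontfun (\<lambda>i. g (of_discrete i) x)" for x
  have J: "apply_bcontfun (J x) i = g (of_discrete i) x" for x i
    unfolding J_def using g
    by (subst apply_Bcontfun_discrete[of _ "norm x"]) (auto simp: contractive_functional_def)
  have "linear J"
    by (rule linearI; rule bcontfun_eqI)
      (use g in \<open>simp_all add: J contractive_functional_def linear_add linear_scale\<close>)
  moreover have "norm (J x) = norm x" for x
  proof (rule antisym)
    show "norm (J x) \<le> norm x"
      by (rule norm_bound) (use g J in \<open>auto simp: contractive_functional_def\<close>)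
  next
    show "norm x \<le> norm (J x)"
    proof (rule field_le_epsilon)
      fix e :: real assume "e > 0"
      then obtain n where n: "g n x > norm x - e"
        using norming by blast
      have "\<bar>g n x\<bar> \<le> norm (J x)"
        using norm_bounded[of "J x" "discrete n"] J[of x "discrete n"]
        by (simp add: discrete_inverse)
      then show "norm x \<le> norm (J x) + e"
        using n by linarith
    qed
  qed
  ultimately show ?thesis by (rule that)
qed

lemma linf_extension_of_hahn_banach_op:
  fixes T :: "'a::real_normed_vector \<Rightarrow> 'b::real_normed_vector" and BX :: "'a set"
  assumes "finite BX" "span BX = UNIV" "hahn_banach_op T" "onorm T = 1"
  obtains J :: "'a \<Rightarrow> linf" and S :: "linf \<Rightarrow> 'b"
  where "linear J" "\<And>x. norm (J x) = norm x" "linear S" "\<And>u. norm (S u) \<le> norm u"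
    "\<And>x. S (J x) = T x"
proof -
  obtain J :: "'a \<Rightarrow> linf" where J: "linear J" "\<And>x. norm (J x) = norm x"
    using isometric_embedding_linf[OF assms(1,2)] by blast
  then obtain S :: "linf \<Rightarrow> 'b" where S: "bounded_linear S" "onorm S = onorm T" "\<forall>x. S (J x) = T x"
    using assms(3) unfolding hahn_banach_wrt_def by blast
  have "norm (S u) \<le> norm u" for u
    using onorm[OF S(1), of u] S(2) assms(4) by simp
  with J bounded_linear.linear[OF S(1)] S(3) show ?thesis
    by (intro that) auto
qed

section \<open>The annihilator of the face of norming functionals\<close>

definition face_annihilator :: "'a::real_normed_vector \<Rightarrow> 'a set" where
  "face_annihilator x0 =
     {x. \<forall>f::'a \<Rightarrow>\<^sub>L real. norm f = 1 \<and> blinfun_apply f x0 = 1 \<longrightarrow> blinfun_apply f x = 0}"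

lemma subspace_face_annihilator: "subspace (face_annihilator x0)"
  unfolding subspace_def face_annihilator_def
  by (simp add: blinfun.zero_right blinfun.add_right blinfun.scaleR_right)

lemma independent_functionals_finite:
  fixes BX :: "'a::real_normed_vector set" and P :: "('a \<Rightarrow>\<^sub>L real) set"
  assumes "finite BX" "span BX = UNIV" "independent P"
  shows "finite P"
proof -
  define \<delta> :: "'a \<Rightarrow> ('a discrete \<Rightarrow>\<^sub>C real)"
    where "\<delta> b = Bcontfun (\<lambda>z. if of_discrete z = b then 1 else 0)" for b
  have \<delta>: "apply_bcontfun (\<delta> b) z = (if of_discrete z = b then 1 else 0)" for b z
    unfolding \<delta>_def by (subst apply_Bcontfun_discrete[where C = 1]) simp_all
  define \<rho> where "\<rho> f = (\<Sum>b\<in>BX. blinfun_apply f b *\<^sub>R \<delta> b)" for f :: "'a \<Rightarrow>\<^sub>L real"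
  have "linear \<rho>"
    unfolding \<rho>_def
    by (intro linearI) (simp_all add: blinfun.add_left blinfun.scaleR_left scaleR_add_left
        sum.distrib scaleR_sum_right)
  have eval: "apply_bcontfun (\<rho> f) (discrete b) = blinfun_apply f b" if "b \<in> BX" for f b
  proof -
    have "apply_bcontfun (\<rho> f) (discrete b)
        = (\<Sum>b'\<in>BX. blinfun_apply f b' * (if b = b' then 1 else 0))"
      unfolding \<rho>_def
      by (induction BX rule: infinite_finite_induct) (simp_all add: \<delta> discrete_inverse)
    also have "\<dots> = (\<Sum>b'\<in>BX. if b = b' then blinfun_apply f b' else 0)"
      by (rule sum.cong) simp_all
    also have "\<dots> = blinfun_apply f b"
      using that \<open>finite BX\<close> by simp
    finally show ?thesis .
  qed
  have "inj \<rho>"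
  proof (rule injI)
    fix f g assume "\<rho> f = \<rho> g"
    then have "blinfun_apply f b = blinfun_apply g b" if "b \<in> BX" for b
      using eval[OF that] by metis
    then have "blinfun_apply f x = blinfun_apply g x" for x
      using linear_eq_on_span[of "blinfun_apply f" "blinfun_apply g" BX x] assms(2)
      by (simp add: bounded_linear.linear[OF blinfun.bounded_linear_right])
    then show "f = g" by (rule blinfun_eqI)
  qed
  have "independent (\<rho> ` P)"
    using \<open>linear \<rho>\<close> \<open>independent P\<close> by (rule linear_independent_injective_image)
      (use \<open>inj \<rho>\<close> in \<open>rule inj_on_subset, simp\<close>)
  moreover have "\<rho> ` P \<subseteq> span (\<delta> ` BX)"
    unfolding \<rho>_def by (auto intro!: span_sum span_scale simp: span_base)
  ultimately have "finite (\<rho> ` P)"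
    using independent_span_bound[of "\<delta> ` BX" "\<rho> ` P"] \<open>finite BX\<close> by auto
  then show ?thesis
    using \<open>inj \<rho>\<close> by (simp add: finite_image_iff inj_on_subset)
qed

lemma face_annihilator_contains_common_kernel:
  fixes x0 :: "'a::real_normed_vector" and BX :: "'a set"
  assumes "finite BX" "span BX = UNIV" "norm x0 = 1"
  obtains H :: "('a \<Rightarrow> real) set"
  where "finite H" "\<And>g. g \<in> H \<Longrightarrow> linear g" "int (card H) \<le> face_dim x0 + 1"
    "{x. \<forall>g\<in>H. g x = 0} \<subseteq> face_annihilator x0"
proof -
  define D where "D = {f :: 'a \<Rightarrow>\<^sub>L real. norm f = 1 \<and> blinfun_apply f x0 = 1}"
  obtain f0 :: "'a \<Rightarrow>\<^sub>L real" where "norm f0 = 1" "blinfun_apply f0 x0 = 1"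
    using exists_norming_blinfun[OF assms] by blast
  then have "f0 \<in> D"
    unfolding D_def by simp
  define P where "P = (\<lambda>f. f - f0) ` D"
  have "face_dim x0 = int (dim P)"
    unfolding face_dim_def P_def D_def[symmetric] using \<open>f0 \<in> D\<close> by (rule set_dim_eq_dim_translate)
  obtain Bp where Bp: "Bp \<subseteq> P" "independent Bp" "P \<subseteq> span Bp" "card Bp = dim P"
    using basis_exists by blast
  have "finite Bp"
    using independent_functionals_finite[OF assms(1,2) Bp(2)] .
  define H where "H = blinfun_apply ` insert f0 Bp"
  have "finite H"
    unfolding H_def using \<open>finite Bp\<close> by simp
  moreover have "linear g" if "g \<in> H" for g
    using that unfolding H_def
    by (auto intro: bounded_linear.linear[OF blinfun.bounded_linear_right])
  moreover have "card H \<le> card Bp + 1"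
    unfolding H_def using \<open>finite Bp\<close> card_image_le[of "insert f0 Bp" blinfun_apply]
    by (simp add: card_insert_if split: if_splits)
  then have "int (card H) \<le> face_dim x0 + 1"
    using Bp(4) \<open>face_dim x0 = int (dim P)\<close> by simp
  moreover have "x \<in> face_annihilator x0" if x: "\<forall>h\<in>H. h x = 0" for x
  proof -
    have "blinfun_apply q x = 0" if "q \<in> span Bp" for q
      using linear_eq_on_span[of "\<lambda>q. blinfun_apply q x" "\<lambda>q. 0" Bp q] that x
      by (auto simp: H_def bounded_linear.linear[OF blinfun.bounded_linear_left] linear_zero)
    moreover have "f - f0 \<in> span Bp" if "f \<in> D" for f
      using that Bp(3) unfolding P_def by auto
    moreover have "blinfun_apply f0 x = 0"
      using x unfolding H_def by simp
    ultimately have "blinfun_apply f x = 0" if "f \<in> D" for f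
      using that by (metis blinfun.diff_left diff_eq_eq add_0)
    then show ?thesis
      unfolding face_annihilator_def D_def by blast
  qed
  ultimately show ?thesis
    using that by blast
qed

lemma contractive_functional_vanishes_on_face_annihilator:
  assumes h: "contractive_functional h" and "norm x0 = 1" "\<bar>h x0\<bar> = 1"
    and "x \<in> face_annihilator x0"
  shows "h x = 0"
proof -
  define s where "s = sgn (h x0)"
  have s: "\<bar>s\<bar> = 1" "s * h x0 = 1"
    using \<open>\<bar>h x0\<bar> = 1\<close> unfolding s_def by (auto simp: sgn_if abs_if split: if_splits)
  have lin: "linear h" and bound: "\<And>y. \<bar>h y\<bar> \<le> norm y"
    using h unfolding contractive_functional_def by auto
  have "linear (\<lambda>y. s * h y)"
    by (rule linearI) (simp_all add: linear_add[OF lin] linear_scale[OF lin] algebra_simps)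
  moreover have "\<bar>s * h y\<bar> \<le> norm y" for y
    using s(1) bound[of y] by (simp add: abs_mult)
  ultimately have "contractive_functional (\<lambda>y. s * h y)"
    unfolding contractive_functional_def by blast
  then have "norm (Blinfun (\<lambda>y. s * h y)) = 1"
    using \<open>norm x0 = 1\<close> s(2) by (rule norm_Blinfun_norming_functional)
  moreover have "blinfun_apply (Blinfun (\<lambda>y. s * h y)) = (\<lambda>y. s * h y)"
    using \<open>contractive_functional (\<lambda>y. s * h y)\<close>
    by (simp add: contractive_functional_bounded_linear bounded_linear_Blinfun_apply)
  ultimately have "s * h x = 0"
    using \<open>x \<in> face_annihilator x0\<close> s(2) unfolding face_annihilator_def by auto
  then show ?thesis
    using s(1) by auto
qed

lemma bounded_sequences_common_convergent_subseq:
  fixes f :: "nat \<Rightarrow> 'b \<Rightarrow> real"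
  assumes "finite A" and bounded: "\<And>a j. \<bar>f j a\<bar> \<le> C a"
  obtains r where "strict_mono r" "\<And>a. a \<in> A \<Longrightarrow> convergent (\<lambda>j. f (r j) a)"
proof -
  have "\<exists>r. strict_mono r \<and> (\<forall>a\<in>A. convergent (\<lambda>j. f (r j) a))"
    using \<open>finite A\<close>
  proof (induction A rule: finite_induct)
    case empty
    show ?case by (intro exI[of _ id]) (simp add: strict_mono_def)
  next
    case (insert a A)
    then obtain r where r: "strict_mono r" "\<forall>b\<in>A. convergent (\<lambda>j. f (r j) b)"
      by blast
    have "bounded (range (\<lambda>j. f (r j) a))"
      by (rule boundedI[of _ "C a"]) (use bounded in auto)
    then obtain l r' where r': "strict_mono r'" "((\<lambda>j. f (r j) a) \<circ> r') \<longlonglongrightarrow> l"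
      using bounded_imp_convergent_subsequence by blast
    have "convergent (\<lambda>j. f (r (r' j)) b)" if "b \<in> insert a A" for b
    proof (cases "b = a")
      case True
      then show ?thesis using r'(2) by (auto simp: convergent_def o_def)
    next
      case False
      then have "convergent (\<lambda>j. f (r j) b)"
        using that r(2) by auto
      from convergent_subseq_convergent[OF this r'(1)] show ?thesis
        by (simp add: o_def)
    qed
    moreover have "strict_mono (\<lambda>j. r (r' j))"
      using strict_mono_o[OF r(1) r'(1)] by (simp add: o_def)
    ultimately show ?case
      by (intro exI[of _ "\<lambda>j. r (r' j)"]) simp
  qed
  then show ?thesis using that by blast
qed

lemma contractive_functional_pointwise_limit:
  assumes g: "\<And>j. contractive_functional (g j)" and lim: "\<And>x. (\<lambda>j. g j x) \<longlonglongrightarrow> h x"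
  shows "contractive_functional h"
proof -
  have lin: "linear (g j)" and bnd: "\<bar>g j x\<bar> \<le> norm x" for j x
    using g unfolding contractive_functional_def by auto
  have "linear h"
  proof (rule linearI)
    fix x y
    have "(\<lambda>j. g j (x + y)) \<longlonglongrightarrow> h x + h y"
      using tendsto_add[OF lim[of x] lim[of y]] by (simp add: linear_add[OF lin])
    then show "h (x + y) = h x + h y"
      using LIMSEQ_unique[OF lim[of "x + y"]] by simp
  next
    fix c x
    have "(\<lambda>j. g j (c *\<^sub>R x)) \<longlonglongrightarrow> c * h x"
      using tendsto_mult_left[OF lim[of x], of c] by (simp add: linear_scale[OF lin])
    then show "h (c *\<^sub>R x) = c *\<^sub>R h x"
      using LIMSEQ_unique[OF lim[of "c *\<^sub>R x"]] by simp
  qed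
  moreover have "\<bar>h x\<bar> \<le> norm x" for x
    by (rule LIMSEQ_le_const2[OF tendsto_rabs[OF lim[of x]]]) (use bnd in auto)
  ultimately show ?thesis
    by (simp add: contractive_functional_def)
qed

lemma contractive_functionals_convergent_subseq:
  fixes g :: "nat \<Rightarrow> 'a::real_normed_vector \<Rightarrow> real" and B :: "'a set"
  assumes "finite B" "span B = UNIV" and g: "\<And>j. contractive_functional (g j)"
  obtains r h where "strict_mono r" "contractive_functional h" "\<And>x. (\<lambda>j. g (r j) x) \<longlonglongrightarrow> h x"
proof -
  have lin: "linear (g j)" and bnd: "\<bar>g j x\<bar> \<le> norm x" for j x
    using g unfolding contractive_functional_def by auto
  obtain r where r: "strict_mono r" "\<And>b. b \<in> B \<Longrightarrow> convergent (\<lambda>j. g (r j) b)"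
    using bounded_sequences_common_convergent_subseq[OF \<open>finite B\<close>, of g norm] bnd by blast
  have "convergent (\<lambda>j. g (r j) x)" for x
  proof -
    obtain u where u: "x = (\<Sum>b\<in>B. u b *\<^sub>R b)"
      using span_finite[OF \<open>finite B\<close>] assms(2) by blast
    have "g (r j) x = (\<Sum>b\<in>B. u b * g (r j) b)" for j
      unfolding u by (simp add: linear_sum[OF lin] linear_scale[OF lin])
    moreover have "(\<lambda>j. \<Sum>b\<in>B. u b * g (r j) b) \<longlonglongrightarrow> (\<Sum>b\<in>B. u b * lim (\<lambda>j. g (r j) b))"
      using r(2) by (intro tendsto_sum tendsto_mult_left) (simp add: convergent_LIMSEQ_iff)
    ultimately show ?thesis
      unfolding convergent_def by auto
  qed
  then have lim: "(\<lambda>j. g (r j) x) \<longlonglongrightarrow> lim (\<lambda>j. g (r j) x)" for x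
    by (simp add: convergent_LIMSEQ_iff)
  define h where "h x = lim (\<lambda>j. g (r j) x)" for x
  have "contractive_functional h"
    using contractive_functional_pointwise_limit[of "\<lambda>j. g (r j)", OF g] lim unfolding h_def .
  show ?thesis
    using r(1) \<open>contractive_functional h\<close> lim unfolding h_def by (rule that)
qed

lemma LIMSEQ_one_of_scaled_gap_bounded:
  fixes u :: "nat \<Rightarrow> real"
  assumes "\<And>n. u n \<le> 1" and gap: "\<And>n. real n * (1 - u n) \<le> C"
  shows "u \<longlonglongrightarrow> 1"
proof (rule tendsto_sandwich[OF _ _ _ tendsto_const])
  show "(\<lambda>n. 1 - C / real n) \<longlonglongrightarrow> 1"
    using tendsto_diff[OF tendsto_const lim_const_over_n[of C], of 1] by simp
  show "\<forall>\<^sub>F n in sequentially. 1 - C / real n \<le> u n"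
  proof (rule eventually_sequentiallyI[of 1])
    fix n :: nat assume "n \<ge> 1"
    then show "1 - C / real n \<le> u n"
      using gap[of n] by (simp add: field_simps)
  qed
  show "\<forall>\<^sub>F n in sequentially. u n \<le> 1"
    using assms(1) by simp
qed

lemma almost_norming_functionals_small_on_face_annihilator:
  fixes x0 x :: "'a::real_normed_vector" and B :: "'a set" and G :: "nat \<Rightarrow> 'a \<Rightarrow> real"
  assumes "finite B" "span B = UNIV" "norm x0 = 1" "x \<in> face_annihilator x0" "e > 0"
    and G: "\<And>n. contractive_functional (G n)" and norming: "(\<lambda>n. \<bar>G n x0\<bar>) \<longlonglongrightarrow> 1"
  shows "\<exists>n. \<bar>G n x\<bar> < e"
proof (rule ccontr)
  assume "\<nexists>n. \<bar>G n x\<bar> < e"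
  then have large: "e \<le> \<bar>G n x\<bar>" for n
    by (simp add: not_less)
  obtain r h where r: "strict_mono r" and h: "contractive_functional h"
    and lim: "\<And>y. (\<lambda>j. G (r j) y) \<longlonglongrightarrow> h y"
    using contractive_functionals_convergent_subseq[OF assms(1,2), of G] G by blast
  have "(\<lambda>j. \<bar>G (r j) x0\<bar>) \<longlonglongrightarrow> 1"
    using LIMSEQ_subseq_LIMSEQ[OF norming r] by (simp add: o_def)
  then have "\<bar>h x0\<bar> = 1"
    by (rule LIMSEQ_unique[OF tendsto_rabs[OF lim[of x0]]])
  moreover have "e \<le> \<bar>h x\<bar>"
    using large by (intro LIMSEQ_le_const[OF tendsto_rabs[OF lim[of x]]]) simp
  ultimately show False
    using contractive_functional_vanishes_on_face_annihilator[OF h \<open>norm x0 = 1\<close> _ assms(4)]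
      \<open>e > 0\<close> by simp
qed

lemma face_annihilator_uniform_bound:
  fixes x0 x :: "'a::real_normed_vector" and B :: "'a set"
  assumes "finite B" "span B = UNIV" "norm x0 = 1" "x \<in> face_annihilator x0" "e > 0"
  obtains M where "\<And>g. contractive_functional g \<Longrightarrow> \<bar>g x\<bar> \<le> e + M * (1 - \<bar>g x0\<bar>)"
proof -
  have "\<exists>M. \<forall>g. contractive_functional g \<longrightarrow> \<bar>g x\<bar> \<le> e + M * (1 - \<bar>g x0\<bar>)"
  proof (rule ccontr)
    assume "\<nexists>M. \<forall>g. contractive_functional g \<longrightarrow> \<bar>g x\<bar> \<le> e + M * (1 - \<bar>g x0\<bar>)"
    then have "\<forall>n::nat. \<exists>g. contractive_functional g \<and> \<bar>g x\<bar> > e + real n * (1 - \<bar>g x0\<bar>)"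
      by (auto simp: not_le)
    then obtain G where "\<forall>n. contractive_functional (G n) \<and> \<bar>G n x\<bar> > e + real n * (1 - \<bar>G n x0\<bar>)"
      by (metis choice)
    then have G: "\<And>n. contractive_functional (G n)"
      and large: "\<And>n. \<bar>G n x\<bar> > e + real n * (1 - \<bar>G n x0\<bar>)"
      by auto
    have bnd: "\<bar>G n y\<bar> \<le> norm y" for n y
      using G unfolding contractive_functional_def by auto
    have gap: "0 \<le> real n * (1 - \<bar>G n x0\<bar>)" for n
      using bnd[of n x0] \<open>norm x0 = 1\<close> by simp
    have "real n * (1 - \<bar>G n x0\<bar>) \<le> norm x" for n
      using large[of n] bnd[of n x] \<open>e > 0\<close> by linarith
    then have "(\<lambda>n. \<bar>G n x0\<bar>) \<longlonglongrightarrow> 1"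
      using bnd[of _ x0] \<open>norm x0 = 1\<close> by (intro LIMSEQ_one_of_scaled_gap_bounded) auto
    then obtain n where "\<bar>G n x\<bar> < e"
      using almost_norming_functionals_small_on_face_annihilator[where G = G, OF assms G] by blast
    with large[of n] gap[of n] show False
      by linarith
  qed
  then show ?thesis
    using that by blast
qed

lemma isometric_embedding_face_annihilator_bound:
  fixes J :: "'a::real_normed_vector \<Rightarrow> ('x::topological_space \<Rightarrow>\<^sub>C real)" and BX :: "'a set"
  assumes "finite BX" "span BX = UNIV" and J: "linear J" "\<And>x. norm (J x) = norm x"
    and "norm x0 = 1" "x \<in> face_annihilator x0" "e > 0"
  shows "\<exists>M. \<forall>i. \<bar>J x i\<bar> \<le> e + M * (1 - \<bar>J x0 i\<bar>)"
proof -
  obtain M where M: "\<And>g. contractive_functional g \<Longrightarrow> \<bar>g x\<bar> \<le> e + M * (1 - \<bar>g x0\<bar>)"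
    using face_annihilator_uniform_bound[OF assms(1,2,5,6,7)] by blast
  have "contractive_functional (\<lambda>y. J y i)" for i
  proof -
    have "linear (\<lambda>y. J y i)"
      by (rule linearI) (simp_all add: linear_add[OF J(1)] linear_scale[OF J(1)])
    moreover have "\<bar>J y i\<bar> \<le> norm y" for y
      using norm_bounded[of "J y" i] J(2)[of y] by simp
    ultimately show ?thesis
      by (simp add: contractive_functional_def)
  qed
  then show ?thesis
    using M by blast
qed

section \<open>Truncation in \<open>l\<^sub>\<infinity>\<close>\<close>

lemma abs_truncate_le:
  fixes H v e :: real
  assumes "0 \<le> H"
  shows "\<bar>max (- H) (min H v)\<bar> \<le> H" "\<bar>max (- H) (min H v)\<bar> \<le> \<bar>v\<bar>"
    and "0 \<le> e \<Longrightarrow> \<bar>v\<bar> \<le> e + H \<Longrightarrow> \<bar>v - max (- H) (min H v)\<bar> \<le> e"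
  using assms by (auto simp: max_def min_def abs_if)

lemma truncated_sum_bounds:
  fixes a b :: real
  assumes "\<bar>a\<bar> \<le> 1" "\<bar>b\<bar> \<le> 1"
  shows "\<bar>max (- 1) (min 1 (a + b)) - a\<bar> \<le> \<bar>b\<bar>"
    and "\<bar>b - (max (- 1) (min 1 (a + b)) - a)\<bar> \<le> \<bar>b\<bar>"
    and "\<bar>a + (max (- 1) (min 1 (a + b)) - a)\<bar> \<le> 1"
    and "\<bar>a - (b - (max (- 1) (min 1 (a + b)) - a))\<bar> \<le> 1"
  using assms by (auto simp: max_def min_def abs_if)

lemma apply_Bcontfun_truncation:
  fixes v :: "'x discrete \<Rightarrow>\<^sub>C real" and H :: "'x discrete \<Rightarrow> real"
  assumes "\<And>i. 0 \<le> H i"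
  shows "apply_bcontfun (Bcontfun (\<lambda>i. max (- H i) (min (H i) (v i)))) i
    = max (- H i) (min (H i) (v i))"
proof -
  have "norm (max (- H i) (min (H i) (v i))) \<le> norm v" for i
    using abs_truncate_le(2)[OF assms, of i "v i"] norm_bounded[of v i] by simp
  then show ?thesis
    by (subst apply_Bcontfun_discrete[where C = "norm v"]) simp_all
qed

lemma norming_functional_vanishes_on_chord:
  assumes \<psi>: "contractive_functional \<psi>" and "\<psi> a = 1" "norm (a + w) \<le> 1" "norm (a - w) \<le> 1"
  shows "\<psi> w = 0"
proof -
  have "\<psi> (a + w) \<le> 1" "\<psi> (a - w) \<le> 1"
    using \<psi> assms(3,4) unfolding contractive_functional_def by (meson abs_le_D1 order_trans)+
  then show ?thesis
    using \<psi> \<open>\<psi> a = 1\<close> by (simp add: contractive_functional_def linear_add linear_diff)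
qed

text \<open>Truncating \<open>v\<close> at \<open>M (1 - \<bar>a\<^sub>i\<bar>)\<close> changes it by at most \<open>e\<close> in norm, and the truncated
  vector \<open>w\<close> satisfies \<open>\<parallel>a \<plusminus> w / M\<parallel> \<le> 1\<close>.\<close>
lemma norming_functional_small:
  fixes \<psi> :: "linf \<Rightarrow> real" and a v :: linf
  assumes \<psi>: "contractive_functional \<psi>" and "norm a \<le> 1" "\<psi> a = 1" "e > 0"
    and small: "\<And>i. \<bar>v i\<bar> \<le> e + M0 * (1 - \<bar>a i\<bar>)"
  shows "\<bar>\<psi> v\<bar> \<le> e"
proof -
  have lin: "linear \<psi>" and bnd: "\<And>u. \<bar>\<psi> u\<bar> \<le> norm u"
    using \<psi> unfolding contractive_functional_def by auto
  have a: "\<bar>a i\<bar> \<le> 1" for i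
    using norm_bounded[of a i] \<open>norm a \<le> 1\<close> by simp
  define M where "M = max M0 1"
  define H where "H i = M * (1 - \<bar>a i\<bar>)" for i
  have "M \<ge> 1"
    unfolding M_def by simp
  have H: "0 \<le> H i" for i
    unfolding H_def using \<open>M \<ge> 1\<close> a[of i] by simp
  have vH: "\<bar>v i\<bar> \<le> e + H i" for i
  proof -
    have "M0 * (1 - \<bar>a i\<bar>) \<le> H i"
      unfolding H_def M_def using a[of i] by (intro mult_right_mono) auto
    then show ?thesis using small[of i] by linarith
  qed
  define w where "w = Bcontfun (\<lambda>i. max (- H i) (min (H i) (v i)))"
  have w: "w i = max (- H i) (min (H i) (v i))" for i
    unfolding w_def by (rule apply_Bcontfun_truncation[OF H])
  have "norm (v - w) \<le> e"
    by (rule norm_bound) (use abs_truncate_le(3)[OF H _ vH] \<open>e > 0\<close> in \<open>simp add: w\<close>)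
  then have "\<bar>\<psi> (v - w)\<bar> \<le> e"
    using bnd[of "v - w"] by linarith
  have chord: "norm (a + (s / M) *\<^sub>R w) \<le> 1" if "\<bar>s\<bar> = 1" for s
  proof (rule norm_bound)
    fix i
    have "\<bar>s / M * w i\<bar> \<le> 1 - \<bar>a i\<bar>"
      using abs_truncate_le(1)[OF H, of i "v i"] \<open>M \<ge> 1\<close> \<open>\<bar>s\<bar> = 1\<close>
      by (simp add: w abs_mult H_def field_simps)
    then show "norm ((a + (s / M) *\<^sub>R w) i) \<le> 1"
      using abs_triangle_ineq[of "a i" "s / M * w i"] by simp
  qed
  have "norm (a + (1 / M) *\<^sub>R w) \<le> 1" "norm (a - (1 / M) *\<^sub>R w) \<le> 1"
    using chord[of 1] chord[of "- 1"] by simp_all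
  then have "\<psi> ((1 / M) *\<^sub>R w) = 0"
    by (rule norming_functional_vanishes_on_chord[OF \<psi> \<open>\<psi> a = 1\<close>])
  then have "\<psi> w = 0"
    using \<open>M \<ge> 1\<close> by (simp add: linear_scale[OF lin])
  then show ?thesis
    using \<open>\<bar>\<psi> (v - w)\<bar> \<le> e\<close> by (simp add: linear_diff[OF lin])
qed

lemma norming_functional_vanishes:
  fixes \<psi> :: "linf \<Rightarrow> real" and a v :: linf
  assumes \<psi>: "contractive_functional \<psi>" and "norm a \<le> 1" "\<psi> a = 1"
    and small: "\<And>e. e > 0 \<Longrightarrow> \<exists>M. \<forall>i. \<bar>v i\<bar> \<le> e + M * (1 - \<bar>a i\<bar>)"
  shows "\<psi> v = 0"
proof -
  have "\<bar>\<psi> v\<bar> \<le> e" if "e > 0" for e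
    using small[OF that] norming_functional_small[OF \<psi> \<open>norm a \<le> 1\<close> \<open>\<psi> a = 1\<close> that] by blast
  then show ?thesis
    by (metis abs_le_zero_iff field_le_epsilon add_0)
qed

lemma linf_split_along_face:
  fixes \<psi> :: "linf \<Rightarrow> real" and a b :: linf
  assumes \<psi>: "contractive_functional \<psi>" and "norm a \<le> 1" "\<psi> a = 1" "norm b \<le> 1"
    and small: "\<And>e. e > 0 \<Longrightarrow> \<exists>M. \<forall>i. \<bar>b i\<bar> \<le> e + M * (1 - \<bar>a i\<bar>)"
  obtains c r where "b = c + r" "norm (a + c) \<le> 1" "norm (a - r) \<le> 1" "\<psi> c = 0" "\<psi> r = 0"
proof -
  have vanishes: "\<psi> v = 0" if v: "\<And>i. \<bar>v i\<bar> \<le> \<bar>b i\<bar>" for v :: linf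
  proof (rule norming_functional_vanishes[OF \<psi> \<open>norm a \<le> 1\<close> \<open>\<psi> a = 1\<close>])
    fix e :: real assume "e > 0"
    then obtain M where M: "\<And>i. \<bar>b i\<bar> \<le> e + M * (1 - \<bar>a i\<bar>)"
      using small by blast
    have "\<bar>v i\<bar> \<le> e + M * (1 - \<bar>a i\<bar>)" for i
      using v[of i] M[of i] by linarith
    then show "\<exists>M. \<forall>i. \<bar>v i\<bar> \<le> e + M * (1 - \<bar>a i\<bar>)"
      by blast
  qed
  have a: "\<bar>a i\<bar> \<le> 1" and b: "\<bar>b i\<bar> \<le> 1" for i
    using norm_bounded[of a i] norm_bounded[of b i] \<open>norm a \<le> 1\<close> \<open>norm b \<le> 1\<close> by simp_all
  define c where "c = Bcontfun (\<lambda>i. max (- 1) (min 1 ((a + b) i))) - a"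
  have c: "c i = max (- 1) (min 1 (a i + b i)) - a i" for i
    using apply_Bcontfun_truncation[of "\<lambda>_. 1" "a + b" i] by (simp add: c_def)
  have bounds: "\<bar>c i\<bar> \<le> \<bar>b i\<bar>" "\<bar>b i - c i\<bar> \<le> \<bar>b i\<bar>"
    "\<bar>a i + c i\<bar> \<le> 1" "\<bar>a i - (b i - c i)\<bar> \<le> 1" for i
    unfolding c by (fact truncated_sum_bounds[OF a[of i] b[of i]])+
  have "norm (a + c) \<le> 1" "norm (a - (b - c)) \<le> 1"
    by (rule norm_bound, simp add: bounds)+
  moreover have "\<psi> c = 0" "\<psi> (b - c) = 0"
    by (rule vanishes, simp add: bounds)+
  ultimately show ?thesis
    using that[of c "b - c"] by simp
qed

section \<open>Dimension of the support set\<close>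

text \<open>The coordinates of \<open>J x\<close> are small where those of \<open>a = J x\<^sub>0\<close> are not close to \<open>\<plusminus>1\<close>; splitting
  \<open>J x = c + r\<close> with \<open>a + c\<close> and \<open>a - r\<close> in the unit ball and \<open>S\<close> mapping both into the face
  gives \<open>T x = (S (a + c) - T x\<^sub>0) - (S (a - r) - T x\<^sub>0)\<close>.\<close>
lemma image_face_annihilator_subset_span_face:
  fixes T :: "'a::real_normed_vector \<Rightarrow> 'b::real_normed_vector" and BX :: "'a set"
    and J :: "'a \<Rightarrow> linf" and S :: "linf \<Rightarrow> 'b"
  assumes "finite BX" "span BX = UNIV"
    and J: "linear J" "\<And>x. norm (J x) = norm x"
    and S: "linear S" "\<And>u. norm (S u) \<le> norm u" "\<And>x. S (J x) = T x"
    and f: "contractive_functional f" "f (T x0) = 1" and "norm x0 = 1"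
  shows "T ` face_annihilator x0 \<subseteq> span ((\<lambda>y. y - T x0) ` (unit_ball \<inter> {y. f y = 1}))"
    (is "_ \<subseteq> ?W")
proof (rule linear_image_subspace_subset_span[OF _ subspace_face_annihilator])
  show "linear T"
    using linear_compose[OF J(1) S(1)] S(3) by (simp add: o_def)
  have \<psi>: "contractive_functional (\<lambda>u. f (S u))"
    using contractive_functional_compose[OF f(1) S(1,2)] .
  have in_W: "S u - T x0 \<in> ?W" if "norm u \<le> 1" "f (S u) = 1" for u
    using S(2)[of u] that by (auto simp: unit_ball_def intro!: span_base)
  fix x assume x: "x \<in> face_annihilator x0" "norm x \<le> 1"
  have "norm (J x0) \<le> 1" "f (S (J x0)) = 1" "norm (J x) \<le> 1"
    using J(2) S(3) f(2) x(2) \<open>norm x0 = 1\<close> by simp_all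
  then obtain c r where cr: "J x = c + r" "norm (J x0 + c) \<le> 1" "norm (J x0 - r) \<le> 1"
    "f (S c) = 0" "f (S r) = 0"
    using linf_split_along_face[OF \<psi>] isometric_embedding_face_annihilator_bound[OF assms(1,2) J
        \<open>norm x0 = 1\<close> x(1)]
    by metis
  have "f (S (J x0 + c)) = 1" "f (S (J x0 - r)) = 1"
    using cr(4,5) \<open>f (S (J x0)) = 1\<close> f(1) unfolding contractive_functional_def
    by (simp_all add: linear_add[OF S(1)] linear_diff[OF S(1)] linear_add linear_diff)
  then have "S (J x0 + c) - T x0 \<in> ?W" "S (J x0 - r) - T x0 \<in> ?W"
    using in_W cr(2,3) by blast+
  then have "(S (J x0 + c) - T x0) - (S (J x0 - r) - T x0) \<in> ?W"
    by (rule span_diff)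
  moreover have "(S (J x0 + c) - T x0) - (S (J x0 - r) - T x0) = T x"
    using cr(1) by (simp add: linear_add[OF S(1)] linear_diff[OF S(1)] S(3)[symmetric])
  ultimately show "T x \<in> ?W"
    by simp
qed

lemma hahn_banach_op_image_face_annihilator:
  fixes T :: "'a::real_normed_vector \<Rightarrow> 'b::real_normed_vector" and BX :: "'a set"
  assumes "finite BX" "span BX = UNIV" "hahn_banach_op T" "onorm T = 1" "norm x0 = 1"
    and "contractive_functional f" "f (T x0) = 1"
  shows "T ` face_annihilator x0 \<subseteq> span ((\<lambda>y. y - T x0) ` (unit_ball \<inter> {y. f y = 1}))"
proof -
  obtain J :: "'a \<Rightarrow> linf" and S :: "linf \<Rightarrow> 'b" where JS: "linear J" "\<And>x. norm (J x) = norm x"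
    "linear S" "\<And>u. norm (S u) \<le> norm u" "\<And>x. S (J x) = T x"
    using linf_extension_of_hahn_banach_op[OF assms(1-4)] by blast
  show ?thesis
    by (rule image_face_annihilator_subset_span_face[OF assms(1,2) JS assms(6,7,5)])
qed

theorem theorem1:
  fixes T :: "'a::real_normed_vector \<Rightarrow> 'b::real_normed_vector"
    and x0 :: 'a and k :: nat
  assumes "\<exists>B::'a set. finite B \<and> span B = UNIV"
    and "\<exists>B::'b set. finite B \<and> span B = UNIV"
    and "hahn_banach_op T"
    and "dim (range T) = k"
    and "onorm T = 1"
    and "x0 \<in> unit_sphere"
    and "norm (T x0) = 1"
  shows "\<exists>F. support_set_of_ball F \<and> T x0 \<in> F \<and> set_dim F \<ge> int k - 1 - face_dim x0"
proof -
  obtain BX :: "'a set" where BX: "finite BX" "span BX = UNIV"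
    using assms(1) by blast
  obtain BY :: "'b set" where BY: "finite BY" "span BY = UNIV"
    using assms(2) by blast
  have "norm x0 = 1" and T: "linear T"
    using assms(3,6) by (simp_all add: unit_sphere_def hahn_banach_wrt_def bounded_linear.linear)
  obtain f where f: "contractive_functional f" "f (T x0) = 1"
    using exists_norming_functional[OF BY assms(7)] by blast
  define F where "F = unit_ball \<inter> {y. f y = 1}"
  obtain H :: "('a \<Rightarrow> real) set" where H: "finite H" "\<And>g. g \<in> H \<Longrightarrow> linear g"
    "int (card H) \<le> face_dim x0 + 1" "{x. \<forall>g\<in>H. g x = 0} \<subseteq> face_annihilator x0"
    using face_annihilator_contains_common_kernel[OF BX \<open>norm x0 = 1\<close>] by blast
  have "T ` {x. \<forall>g\<in>H. g x = 0} \<subseteq> span ((\<lambda>y. y - T x0) ` F)"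
    unfolding F_def using image_mono[OF H(4)]
      hahn_banach_op_image_face_annihilator[OF BX assms(3,5) \<open>norm x0 = 1\<close> f]
    by (rule order_trans)
  then have "dim (T ` {x. \<forall>g\<in>H. g x = 0}) \<le> dim ((\<lambda>y. y - T x0) ` F)"
    by (rule dim_mono_finite_span[OF BY])
  then have "k \<le> dim ((\<lambda>y. y - T x0) ` F) + card H"
    using dim_range_le_dim_image_common_kernel[OF T H(1,2) BY] assms(4) by linarith
  moreover have "T x0 \<in> F"
    using assms(7) f(2) by (simp add: F_def unit_ball_def)
  ultimately have "set_dim F \<ge> int k - 1 - face_dim x0"
    using set_dim_eq_dim_translate[of "T x0" F] H(3) by linarith
  moreover have "support_set_of_ball F"
    unfolding F_def by (rule support_set_of_ball_norming_face[OF f(1) assms(7) f(2)])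
  ultimately show ?thesis
    using \<open>T x0 \<in> F\<close> by blast
qed

end
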